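(* Let $A$ be a unital alternative $*$-algebra over $\mathbb{C}$ with unit $1_A$, and let $n\ge 2$ be a fixed integer. Assume that $A$ contains a nontrivial symmetric idempotent $e$ (i.e. $e^2=e=e^*$, $e\neq 0$, $e\neq 1_A$) such that (i) if $x\in A$ and $(xa)e=0$ for all $a\in A$, then $x=0$; and (ii) if $x\in A$ and $(xa)(1_A-e)=0$ for all $a\in A$, then $x=0$. If a (not necessarily additive) map $\Phi:A\to A$ satisfies $$\Phi(a_1\bullet a_2\bullet\cdots\bullet a_n)=\sum_{k=1}^{n} a_1\bullet\cdots\bullet a_{k-1}\bullet\Phi(a_k)\bullet a_{k+1}\bullet\cdots\bullet a_n$$ for all $a_{n-1},a_n\in A$ and $a_i=1_A$ for all $i\in\{1,\dots,n-2\}$, then $\Phi$ is an additive $*$-derivation.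
   Context: An algebra $A$ (not necessarily associative) is alternative if $a^2b=a(ab)$ and $ba^2=(ba)a$ for all $a,b\in A$. An involution on $A$ is a map $*:A\to A$ with $(x+y)^*=x^*+y^*$, $(x^* )^*=x$, $(xy)^*=y^*x^*$; an alternative $*$-algebra is an alternative algebra with an involution. For $a,b\in A$ the Jordan $*$-product is $a\bullet b=ab+ba^*$, and iterated products are left-normed: $a_1\bullet a_2\bullet\cdots\bullet a_n=(\cdots((a_1\bullet a_2)\bullet a_3)\cdots)\bullet a_n$. A map $\Phi:A\to A$ is an additive $*$-derivation if $\Phi(a+b)=\Phi(a)+\Phi(b)$, $\Phi(ab)=\Phi(a)b+a\Phi(b)$ and $\Phi(a^* )=\Phi(a)^*$ for all $a,b\in A$. *)

theory Defs
  imports Complex_Main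
begin

definition complex_bilinear_mult ::
  "(complex \<Rightarrow> 'a::ab_group_add \<Rightarrow> 'a) \<Rightarrow> ('a \<Rightarrow> 'a \<Rightarrow> 'a) \<Rightarrow> bool" where
  "complex_bilinear_mult sc mult \<longleftrightarrow> vector_space sc \<and>
     (\<forall>a b c. mult (a + b) c = mult a c + mult b c) \<and>
     (\<forall>a b c. mult a (b + c) = mult a b + mult a c) \<and>
     (\<forall>(r::complex) a b. mult (sc r a) b = sc r (mult a b)) \<and>
     (\<forall>(r::complex) a b. mult a (sc r b) = sc r (mult a b))"

definition alternative :: "('a \<Rightarrow> 'a \<Rightarrow> 'a) \<Rightarrow> bool" where
  "alternative mult \<longleftrightarrow>
     (\<forall>a b. mult (mult a a) b = mult a (mult a b)) \<and>
     (\<forall>a b. mult b (mult a a) = mult (mult b a) a)"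

definition is_unit :: "('a \<Rightarrow> 'a \<Rightarrow> 'a) \<Rightarrow> 'a \<Rightarrow> bool" where
  "is_unit mult one \<longleftrightarrow> (\<forall>a. mult one a = a \<and> mult a one = a)"

definition involution :: "('a::plus \<Rightarrow> 'a \<Rightarrow> 'a) \<Rightarrow> ('a \<Rightarrow> 'a) \<Rightarrow> bool" where
  "involution mult star \<longleftrightarrow>
     (\<forall>x y. star (x + y) = star x + star y) \<and>
     (\<forall>x. star (star x) = x) \<and>
     (\<forall>x y. star (mult x y) = mult (star y) (star x))"

definition unital_alt_star_algebra ::
  "(complex \<Rightarrow> 'a::ab_group_add \<Rightarrow> 'a) \<Rightarrow> ('a \<Rightarrow> 'a \<Rightarrow> 'a) \<Rightarrow> ('a \<Rightarrow> 'a) \<Rightarrow> 'a \<Rightarrow> bool" where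
  "unital_alt_star_algebra sc mult star one \<longleftrightarrow>
     complex_bilinear_mult sc mult \<and> alternative mult \<and> is_unit mult one \<and> involution mult star"

definition jstar :: "('a::plus \<Rightarrow> 'a \<Rightarrow> 'a) \<Rightarrow> ('a \<Rightarrow> 'a) \<Rightarrow> 'a \<Rightarrow> 'a \<Rightarrow> 'a" where
  "jstar mult star a b = mult a b + mult b (star a)"

definition jprod :: "('a::plus \<Rightarrow> 'a \<Rightarrow> 'a) \<Rightarrow> ('a \<Rightarrow> 'a) \<Rightarrow> 'a list \<Rightarrow> 'a" where
  "jprod mult star as = foldl (jstar mult star) (hd as) (tl as)"

definition additive_star_derivation ::
  "('a::ab_group_add \<Rightarrow> 'a \<Rightarrow> 'a) \<Rightarrow> ('a \<Rightarrow> 'a) \<Rightarrow> ('a \<Rightarrow> 'a) \<Rightarrow> bool" where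
  "additive_star_derivation mult star \<Phi> \<longleftrightarrow>
     (\<forall>a b. \<Phi> (a + b) = \<Phi> a + \<Phi> b) \<and>
     (\<forall>a b. \<Phi> (mult a b) = mult (\<Phi> a) b + mult a (\<Phi> b)) \<and>
     (\<forall>a. \<Phi> (star a) = star (\<Phi> a))"

end

theory Submission
  imports Defs
begin

(* Multiplying out the n - 2 leading units turns the hypothesis into
     Phi (K (x . y)) = (U . x) . y + K (Phi x . y + x . Phi y),   K = 2^(n-2),
   where . is the Jordan *-product and U is a combination of Phi 1 and star (Phi 1) with natural
   coefficients.  Everything is then read off in the Peirce decomposition A = A11 + A12 + A21 + A22
   of the symmetric idempotent e, where Jordan products with e, 1 - e and 2e - 1 detect the
   components.  The identity forces the additivity defect Phi (a + b) - Phi a - Phi b to vanish,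
   first for a, b in different Peirce spaces and then within each space (using condition (ii),
   and symmetrically (i) with 1 - e in place of e).  Once Phi is additive, x = y = 1 shows
   Phi 1 skew and central, so U . x = 0 and Phi is a Jordan *-derivation; then Phi 1 = 0 and
   Phi commutes with *.  Finally the derivation defect Phi (ab) - Phi a b - a Phi b satisfies
   the linearized alternative laws and changes sign under (a, b) -> (b, star a); comparing Peirce
   labels kills it off the diagonal, and faithfulness kills it on A11 and A22. *)

locale alt_star_algebra =
  fixes sc :: "complex \<Rightarrow> 'a::ab_group_add \<Rightarrow> 'a"
    and mult :: "'a \<Rightarrow> 'a \<Rightarrow> 'a" (infixl "\<cdot>" 70)
    and star :: "'a \<Rightarrow> 'a" and one :: 'a
  assumes vector_space: "vector_space sc"
    and distrib_right: "(a + b) \<cdot> c = a \<cdot> c + b \<cdot> c"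
    and distrib_left: "a \<cdot> (b + c) = a \<cdot> b + a \<cdot> c"
    and scale_mult_left: "sc r a \<cdot> b = sc r (a \<cdot> b)"
    and scale_mult_right: "a \<cdot> sc r b = sc r (a \<cdot> b)"
    and left_alternative: "(a \<cdot> a) \<cdot> b = a \<cdot> (a \<cdot> b)"
    and right_alternative: "b \<cdot> (a \<cdot> a) = (b \<cdot> a) \<cdot> a"
    and one_mult [simp]: "one \<cdot> a = a" and mult_one [simp]: "a \<cdot> one = a"
    and star_add: "star (x + y) = star x + star y"
    and star_star [simp]: "star (star x) = x"
    and star_mult: "star (x \<cdot> y) = star y \<cdot> star x"
begin

sublocale vs: vector_space sc by (rule vector_space)

lemma zero_mult [simp]: "0 \<cdot> a = 0"
  using distrib_right[of 0 0 a] by simp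

lemma mult_zero [simp]: "a \<cdot> 0 = 0"
  using distrib_left[of a 0 0] by simp

lemma minus_mult: "(- a) \<cdot> b = - (a \<cdot> b)"
  using distrib_right[of a "- a" b] by (simp add: add_eq_0_iff)

lemma mult_minus: "a \<cdot> (- b) = - (a \<cdot> b)"
  using distrib_left[of a b "- b"] by (simp add: add_eq_0_iff)

lemma diff_mult: "(a - b) \<cdot> c = a \<cdot> c - b \<cdot> c"
  using distrib_right[of a "- b" c] by (simp add: minus_mult)

lemma mult_diff: "a \<cdot> (b - c) = a \<cdot> b - a \<cdot> c"
  using distrib_left[of a b "- c"] by (simp add: mult_minus)

lemmas mult_linear = distrib_right distrib_left minus_mult mult_minus diff_mult mult_diff
  scale_mult_left scale_mult_right

lemma star_zero [simp]: "star 0 = 0"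
  using star_add[of 0 0] by simp

lemma star_minus: "star (- x) = - star x"
  using star_add[of x "- x"] by (simp add: add_eq_0_iff)

lemma star_diff: "star (x - y) = star x - star y"
  using star_add[of x "- y"] by (simp add: star_minus)

lemma star_one [simp]: "star one = one"
  using star_mult[of "star one" one] by simp

lemma star_scale_of_nat: "star (sc (of_nat k) x) = sc (of_nat k) (star x)"
  by (induction k) (simp_all add: vs.scale_left_distrib star_add)

lemma star_scale_of_int: "star (sc (of_int k) x) = sc (of_int k) (star x)"
  by (cases k rule: int_cases2)
    (simp_all add: star_scale_of_nat star_minus vs.scale_minus_left)

lemma add_self_eq_scale_2: "x + x = sc 2 x"
  using vs.scale_left_distrib[of 1 1 x] by simp

lemma add_self_eq_0_iff: "x + x = 0 \<longleftrightarrow> x = (0::'a)"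
  by (simp add: add_self_eq_scale_2)

lemma left_alternative_linear: "(a \<cdot> b) \<cdot> c - a \<cdot> (b \<cdot> c) + ((b \<cdot> a) \<cdot> c - b \<cdot> (a \<cdot> c)) = 0"
proof -
  have "(a \<cdot> b) \<cdot> c - a \<cdot> (b \<cdot> c) + ((b \<cdot> a) \<cdot> c - b \<cdot> (a \<cdot> c)) =
    (((a + b) \<cdot> (a + b)) \<cdot> c - (a + b) \<cdot> ((a + b) \<cdot> c))
      - ((a \<cdot> a) \<cdot> c - a \<cdot> (a \<cdot> c)) - ((b \<cdot> b) \<cdot> c - b \<cdot> (b \<cdot> c))"
    by (simp add: distrib_right distrib_left algebra_simps)
  then show ?thesis by (simp add: left_alternative)
qed

lemma right_alternative_linear: "(a \<cdot> b) \<cdot> c - a \<cdot> (b \<cdot> c) + ((a \<cdot> c) \<cdot> b - a \<cdot> (c \<cdot> b)) = 0"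
proof -
  have "(a \<cdot> b) \<cdot> c - a \<cdot> (b \<cdot> c) + ((a \<cdot> c) \<cdot> b - a \<cdot> (c \<cdot> b)) =
    - ((a \<cdot> ((b + c) \<cdot> (b + c)) - (a \<cdot> (b + c)) \<cdot> (b + c))
      - (a \<cdot> (b \<cdot> b) - (a \<cdot> b) \<cdot> b) - (a \<cdot> (c \<cdot> c) - (a \<cdot> c) \<cdot> c))"
    by (simp add: distrib_right distrib_left algebra_simps)
  then show ?thesis by (simp add: right_alternative)
qed

lemma flexible: "(a \<cdot> b) \<cdot> a = a \<cdot> (b \<cdot> a)"
  using right_alternative_linear[of a b a] left_alternative[of a b] by (simp add: algebra_simps)

abbreviation jmult (infixl "\<bullet>" 68) where "a \<bullet> b \<equiv> jstar (\<cdot>) star a b"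

lemma jmult_def: "a \<bullet> b = a \<cdot> b + b \<cdot> star a"
  by (simp add: jstar_def)

lemma jmult_add_left: "(a + b) \<bullet> c = a \<bullet> c + b \<bullet> c"
  and jmult_add_right: "a \<bullet> (b + c) = a \<bullet> b + a \<bullet> c"
  and jmult_diff_left: "(a - b) \<bullet> c = a \<bullet> c - b \<bullet> c"
  and jmult_diff_right: "a \<bullet> (b - c) = a \<bullet> b - a \<bullet> c"
  and jmult_scale_right: "a \<bullet> sc r b = sc r (a \<bullet> b)"
  and jmult_scale_of_nat_left: "sc (of_nat k) a \<bullet> b = sc (of_nat k) (a \<bullet> b)"
  by (simp_all add: jmult_def mult_linear star_add star_diff star_scale_of_nat
      vs.scale_right_distrib algebra_simps)

lemma jmult_zero_left [simp]: "0 \<bullet> c = 0"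
  and jmult_zero_right [simp]: "a \<bullet> 0 = 0"
  by (simp_all add: jmult_def)

lemmas jmult_linear = jmult_add_left jmult_add_right jmult_diff_left jmult_diff_right
  jmult_scale_right

end

section \<open>Peirce decomposition\<close>

locale peirce_decomposition = alt_star_algebra +
  fixes e :: 'a
  assumes idempotent [simp]: "e \<cdot> e = e" and star_e [simp]: "star e = e"
begin

lemma e_mult_e_mult [simp]: "e \<cdot> (e \<cdot> x) = e \<cdot> x"
  using left_alternative[of e x] by simp

lemma mult_e_mult_e [simp]: "(x \<cdot> e) \<cdot> e = x \<cdot> e"
  using right_alternative[of x e] by simp

lemma e_mult_mult: "e \<cdot> (x \<cdot> y) = (e \<cdot> x) \<cdot> y + (x \<cdot> e) \<cdot> y - x \<cdot> (e \<cdot> y)"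
  using left_alternative_linear[of e x y] by (simp add: algebra_simps)

lemma mult_mult_e: "(x \<cdot> y) \<cdot> e = x \<cdot> (y \<cdot> e) - (x \<cdot> e) \<cdot> y + x \<cdot> (e \<cdot> y)"
  using right_alternative_linear[of x y e] by (simp add: algebra_simps)

text \<open>The Peirce spaces \<open>A\<^sub>1\<^sub>1, A\<^sub>1\<^sub>2, A\<^sub>2\<^sub>1, A\<^sub>2\<^sub>2\<close> of \<open>e\<close> are \<open>peirce 1 1\<close>, \<open>peirce 1 0\<close>,
  \<open>peirce 0 1\<close>, \<open>peirce 0 0\<close>; integer labels make the multiplication rule a single formula.\<close>

definition peirce :: "int \<Rightarrow> int \<Rightarrow> 'a \<Rightarrow> bool" where
  "peirce i j x \<longleftrightarrow> e \<cdot> x = sc (of_int i) x \<and> x \<cdot> e = sc (of_int j) x"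

lemma peirce_mult_eigen:
  assumes "peirce i j a" "peirce k l b"
  shows "e \<cdot> (a \<cdot> b) = sc (of_int (i + j - k)) (a \<cdot> b)"
    and "(a \<cdot> b) \<cdot> e = sc (of_int (k + l - j)) (a \<cdot> b)"
  using assms unfolding peirce_def
  by (simp_all add: e_mult_mult mult_mult_e scale_mult_left scale_mult_right
      vs.scale_left_distrib vs.scale_left_diff_distrib)

lemma left_eigen_eq_0:
  assumes "e \<cdot> z = sc (of_int i) z" "i \<noteq> 0" "i \<noteq> 1"
  shows "z = 0"
proof -
  have "sc (of_int (i * i)) z = sc (of_int i) z"
    using e_mult_e_mult[of z] by (simp add: assms(1) scale_mult_right)
  moreover have "i * i \<noteq> i" using assms(2,3) by simp
  ultimately show ?thesis by (metis of_int_eq_iff vs.scale_cancel_right)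
qed

lemma right_eigen_eq_0:
  assumes "z \<cdot> e = sc (of_int i) z" "i \<noteq> 0" "i \<noteq> 1"
  shows "z = 0"
proof -
  have "sc (of_int (i * i)) z = sc (of_int i) z"
    using mult_e_mult_e[of z] by (simp add: assms(1) scale_mult_left)
  moreover have "i * i \<noteq> i" using assms(2,3) by simp
  ultimately show ?thesis by (metis of_int_eq_iff vs.scale_cancel_right)
qed

lemma peirce_mult:
  assumes "peirce i j a" "peirce k l b"
  shows "peirce (i + j - k) (k + l - j) (a \<cdot> b)"
  using peirce_mult_eigen[OF assms] unfolding peirce_def by blast

lemma peirce_mult_eq_0:
  assumes "peirce i j a" "peirce k l b" "i + j - k \<notin> {0, 1} \<or> k + l - j \<notin> {0, 1}"
  shows "a \<cdot> b = 0"
  using assms(3) left_eigen_eq_0[OF peirce_mult_eigen(1)[OF assms(1,2)]]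
    right_eigen_eq_0[OF peirce_mult_eigen(2)[OF assms(1,2)]] by auto

lemma peirce_star: "peirce i j x \<Longrightarrow> peirce j i (star x)"
  unfolding peirce_def by (metis star_e star_scale_of_int star_mult)

lemma peirce_add: "peirce i j x \<Longrightarrow> peirce i j y \<Longrightarrow> peirce i j (x + y)"
  unfolding peirce_def by (simp add: mult_linear vs.scale_right_distrib)

lemma peirce_scale: "peirce i j x \<Longrightarrow> peirce i j (sc r x)"
  unfolding peirce_def by (simp add: mult_linear vs.scale_left_commute)

lemma peirce_zero [simp]: "peirce i j 0"
  unfolding peirce_def by simp

lemma peirce_e: "peirce 1 1 e"
  unfolding peirce_def by simp

lemma peirce_one_minus_e: "peirce 0 0 (one - e)"
  unfolding peirce_def by (simp add: mult_linear)

definition "p11 x = (e \<cdot> x) \<cdot> e"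
definition "p12 x = e \<cdot> x - (e \<cdot> x) \<cdot> e"
definition "p21 x = x \<cdot> e - (e \<cdot> x) \<cdot> e"
definition "p22 x = x - e \<cdot> x - x \<cdot> e + (e \<cdot> x) \<cdot> e"

lemmas proj_defs = p11_def p12_def p21_def p22_def

lemma peirce_decomp: "x = p11 x + p12 x + p21 x + p22 x"
  unfolding proj_defs by (simp add: algebra_simps)

lemma e_mult_eq: "e \<cdot> x = p11 x + p12 x"
  unfolding proj_defs by simp

lemma mult_e_eq: "x \<cdot> e = p11 x + p21 x"
  unfolding proj_defs by simp

lemma peirce_p11: "peirce 1 1 (p11 x)"
  and peirce_p12: "peirce 1 0 (p12 x)"
  and peirce_p21: "peirce 0 1 (p21 x)"
  and peirce_p22: "peirce 0 0 (p22 x)"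
  unfolding peirce_def proj_defs
  by (simp_all add: mult_linear flexible flexible[of e "x \<cdot> e", symmetric])

lemma proj_peirce_11 [simp]:
  assumes "peirce 1 1 y" shows "p11 y = y" "p12 y = 0" "p21 y = 0" "p22 y = 0"
  using assms unfolding peirce_def proj_defs by simp_all

lemma proj_peirce_12 [simp]:
  assumes "peirce 1 0 y" shows "p11 y = 0" "p12 y = y" "p21 y = 0" "p22 y = 0"
  using assms unfolding peirce_def proj_defs by simp_all

lemma proj_peirce_21 [simp]:
  assumes "peirce 0 1 y" shows "p11 y = 0" "p12 y = 0" "p21 y = y" "p22 y = 0"
  using assms unfolding peirce_def proj_defs by simp_all

lemma proj_peirce_22 [simp]:
  assumes "peirce 0 0 y" shows "p11 y = 0" "p12 y = 0" "p21 y = 0" "p22 y = y"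
  using assms unfolding peirce_def proj_defs by simp_all

lemma proj_proj [simp]:
  "p11 (p11 x) = p11 x" "p12 (p11 x) = 0" "p21 (p11 x) = 0" "p22 (p11 x) = 0"
  "p11 (p12 x) = 0" "p12 (p12 x) = p12 x" "p21 (p12 x) = 0" "p22 (p12 x) = 0"
  "p11 (p21 x) = 0" "p12 (p21 x) = 0" "p21 (p21 x) = p21 x" "p22 (p21 x) = 0"
  "p11 (p22 x) = 0" "p12 (p22 x) = 0" "p21 (p22 x) = 0" "p22 (p22 x) = p22 x"
  using peirce_p11[of x] peirce_p12[of x] peirce_p21[of x] peirce_p22[of x] by simp_all

lemma proj_add:
  "p11 (x + y) = p11 x + p11 y" "p12 (x + y) = p12 x + p12 y"
  "p21 (x + y) = p21 x + p21 y" "p22 (x + y) = p22 x + p22 y"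
  unfolding proj_defs by (simp_all add: mult_linear algebra_simps)

lemma proj_diff:
  "p11 (x - y) = p11 x - p11 y" "p12 (x - y) = p12 x - p12 y"
  "p21 (x - y) = p21 x - p21 y" "p22 (x - y) = p22 x - p22 y"
  unfolding proj_defs by (simp_all add: mult_linear algebra_simps)

lemma proj_minus:
  "p11 (- x) = - p11 x" "p12 (- x) = - p12 x" "p21 (- x) = - p21 x" "p22 (- x) = - p22 x"
  unfolding proj_defs by (simp_all add: mult_linear algebra_simps)

lemma proj_scale:
  "p11 (sc r x) = sc r (p11 x)" "p12 (sc r x) = sc r (p12 x)"
  "p21 (sc r x) = sc r (p21 x)" "p22 (sc r x) = sc r (p22 x)"
  unfolding proj_defs
  by (simp_all add: mult_linear vs.scale_right_diff_distrib vs.scale_right_distrib)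

lemma proj_zero [simp]: "p11 0 = 0" "p12 0 = 0" "p21 0 = 0" "p22 0 = 0"
  unfolding proj_defs by simp_all

lemmas proj_linear = proj_add proj_diff proj_minus proj_scale

lemma proj_star:
  "p11 (star x) = star (p11 x)" "p12 (star x) = star (p21 x)"
  "p21 (star x) = star (p12 x)" "p22 (star x) = star (p22 x)"
  unfolding proj_defs by (simp_all add: star_mult star_diff star_add flexible)

lemma eq_0_if_projs_eq_0: "p11 t = 0 \<Longrightarrow> p12 t = 0 \<Longrightarrow> p21 t = 0 \<Longrightarrow> p22 t = 0 \<Longrightarrow> t = 0"
  using peirce_decomp[of t] by simp

lemma e_jmult: "e \<bullet> x = sc 2 (p11 x) + p12 x + p21 x"
  by (simp add: jmult_def e_mult_eq mult_e_eq add_self_eq_scale_2[symmetric] algebra_simps)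

lemma one_minus_e_jmult: "(one - e) \<bullet> x = p12 x + p21 x + sc 2 (p22 x)"
proof -
  have "(one - e) \<bullet> x = x + x - e \<cdot> x - x \<cdot> e"
    by (simp add: jmult_def mult_linear star_diff algebra_simps)
  also have "\<dots> = p12 x + p21 x + sc 2 (p22 x)"
    by (subst (1 2) peirce_decomp[of x])
      (simp add: e_mult_eq mult_e_eq add_self_eq_scale_2[symmetric] algebra_simps)
  finally show ?thesis .
qed

lemma reflection_jmult: "(e + e - one) \<bullet> x = sc 2 (p11 x) - sc 2 (p22 x)"
proof -
  have "(e + e - one) \<bullet> x = e \<bullet> x + e \<bullet> x - (x + x)"
    by (simp add: jmult_def mult_linear star_add star_diff)
  then show ?thesis
    by (subst (asm) (3 4) peirce_decomp[of x])
      (simp add: e_jmult add_self_eq_scale_2[symmetric] algebra_simps)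
qed

lemma jmult_e: "x \<bullet> e = p11 x + p21 x + star (p11 x) + star (p21 x)"
  by (simp add: jmult_def mult_e_eq star_mult[of x e, simplified, symmetric] star_add add.assoc)

lemma jmult_one_minus_e: "x \<bullet> (one - e) = p12 x + p22 x + star (p12 x) + star (p22 x)"
proof -
  have "x \<bullet> (one - e) = (x - x \<cdot> e) + star (x - x \<cdot> e)"
    by (simp add: jmult_def mult_linear star_diff star_mult)
  also have "x - x \<cdot> e = p12 x + p22 x"
    by (subst (1) peirce_decomp[of x]) (simp add: mult_e_eq)
  finally show ?thesis by (simp add: star_add add.assoc)
qed

lemma e_jmult_eq_0D:
  assumes "e \<bullet> t = 0" shows "p11 t = 0" "p12 t = 0" "p21 t = 0"
proof -
  have "sc 2 (p11 t) + p12 t + p21 t = 0" using assms e_jmult by simp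
  from arg_cong[OF this, of p11] arg_cong[OF this, of p12] arg_cong[OF this, of p21]
  show "p11 t = 0" "p12 t = 0" "p21 t = 0" by (simp_all add: proj_linear)
qed

lemma one_minus_e_jmult_eq_0D:
  assumes "(one - e) \<bullet> t = 0" shows "p12 t = 0" "p21 t = 0" "p22 t = 0"
proof -
  have "p12 t + p21 t + sc 2 (p22 t) = 0" using assms one_minus_e_jmult by simp
  from arg_cong[OF this, of p12] arg_cong[OF this, of p21] arg_cong[OF this, of p22]
  show "p12 t = 0" "p21 t = 0" "p22 t = 0" by (simp_all add: proj_linear)
qed

lemma reflection_jmult_eq_0D:
  assumes "(e + e - one) \<bullet> t = 0" shows "p11 t = 0" "p22 t = 0"
proof -
  have "sc 2 (p11 t) - sc 2 (p22 t) = 0" using assms reflection_jmult by simp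
  from arg_cong[OF this, of p11] arg_cong[OF this, of p22]
  show "p11 t = 0" "p22 t = 0" by (simp_all add: proj_linear)
qed

lemma jmult_e_eq_0D:
  assumes "t \<bullet> e = 0" shows "p21 t = 0"
proof -
  have "p11 t + p21 t + star (p11 t) + star (p21 t) = 0" using assms jmult_e by simp
  from arg_cong[OF this, of p21] show ?thesis
    using peirce_star[OF peirce_p11[of t]] peirce_star[OF peirce_p21[of t]]
    by (simp add: proj_linear)
qed

lemma jmult_one_minus_e_eq_0D:
  assumes "t \<bullet> (one - e) = 0" shows "p12 t = 0"
proof -
  have "p12 t + p22 t + star (p12 t) + star (p22 t) = 0" using assms jmult_one_minus_e by simp
  from arg_cong[OF this, of p12] show ?thesis
    using peirce_star[OF peirce_p12[of t]] peirce_star[OF peirce_p22[of t]]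
    by (simp add: proj_linear)
qed

end

text \<open>The hypothesis of the theorem once the \<open>m = n - 2\<close> leading units are multiplied out:
  they contribute the factor \<open>K = 2\<^sup>m\<close>, and \<open>U\<close> collects the terms in which \<open>\<Phi>\<close> hits one of them.\<close>

locale scaled_jordan_identity = peirce_decomposition +
  fixes \<Phi> :: "'a \<Rightarrow> 'a" and K :: nat and U :: 'a and \<alpha> \<beta> :: nat
  assumes faithful_e: "\<And>x. (\<forall>a. (x \<cdot> a) \<cdot> e = 0) \<Longrightarrow> x = 0"
    and faithful_one_minus_e: "\<And>x. (\<forall>a. (x \<cdot> a) \<cdot> (one - e) = 0) \<Longrightarrow> x = 0"
    and Phi_scaled_jmult: "\<And>x y. \<Phi> (sc (of_nat K) (x \<bullet> y)) =
      (U \<bullet> x) \<bullet> y + sc (of_nat K) (\<Phi> x \<bullet> y) + sc (of_nat K) (x \<bullet> \<Phi> y)"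
    and K_pos: "K > 0"
    and U_eq: "U = sc (of_nat \<alpha>) (\<Phi> one) + sc (of_nat \<beta>) (star (\<Phi> one))"
begin

lemma Phi_zero [simp]: "\<Phi> 0 = 0"
  using Phi_scaled_jmult[of 0 0] by simp

lemma scaled_jordan_identity_one_minus_e:
  "scaled_jordan_identity sc (\<cdot>) star one (one - e) \<Phi> K U \<alpha> \<beta>"
proof -
  have "peirce_decomposition sc (\<cdot>) star one (one - e)"
    by unfold_locales (simp_all add: mult_linear star_diff)
  moreover have "scaled_jordan_identity_axioms sc (\<cdot>) star one (one - e) \<Phi> K U \<alpha> \<beta>"
  proof
    show "\<And>x. \<forall>a. x \<cdot> a \<cdot> (one - e) = 0 \<Longrightarrow> x = 0" by (rule faithful_one_minus_e)
    show "\<And>x. \<forall>a. x \<cdot> a \<cdot> (one - (one - e)) = 0 \<Longrightarrow> x = 0" using faithful_e by simp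
  qed (use Phi_scaled_jmult K_pos U_eq in auto)
  ultimately show ?thesis by (intro scaled_jordan_identity.intro)
qed

section \<open>Additivity\<close>

definition add_defect :: "'a \<Rightarrow> 'a \<Rightarrow> 'a" where
  "add_defect a b = \<Phi> (a + b) - \<Phi> a - \<Phi> b"

lemma add_defect_eq_0_iff: "add_defect a b = 0 \<longleftrightarrow> \<Phi> (a + b) = \<Phi> a + \<Phi> b"
  by (auto simp: add_defect_def algebra_simps)

lemma jmult_add_defect:
  assumes "\<Phi> (sc (of_nat K) (c \<bullet> a) + sc (of_nat K) (c \<bullet> b)) =
    \<Phi> (sc (of_nat K) (c \<bullet> a)) + \<Phi> (sc (of_nat K) (c \<bullet> b))"
  shows "c \<bullet> add_defect a b = 0"
proof -
  have "\<Phi> (sc (of_nat K) (c \<bullet> (a + b))) = \<Phi> (sc (of_nat K) (c \<bullet> a)) + \<Phi> (sc (of_nat K) (c \<bullet> b))"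
    using assms by (simp add: jmult_linear vs.scale_right_distrib)
  then have "sc (of_nat K) (c \<bullet> add_defect a b) = 0"
    unfolding Phi_scaled_jmult add_defect_def
    by (simp add: jmult_linear vs.scale_right_distrib vs.scale_right_diff_distrib algebra_simps)
  then show ?thesis using K_pos by simp
qed

lemma add_defect_jmult:
  assumes "\<Phi> (sc (of_nat K) (a \<bullet> c) + sc (of_nat K) (b \<bullet> c)) =
    \<Phi> (sc (of_nat K) (a \<bullet> c)) + \<Phi> (sc (of_nat K) (b \<bullet> c))"
  shows "add_defect a b \<bullet> c = 0"
proof -
  have "\<Phi> (sc (of_nat K) ((a + b) \<bullet> c)) = \<Phi> (sc (of_nat K) (a \<bullet> c)) + \<Phi> (sc (of_nat K) (b \<bullet> c))"
    using assms by (simp add: jmult_linear vs.scale_right_distrib)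
  then have "sc (of_nat K) (add_defect a b \<bullet> c) = 0"
    unfolding Phi_scaled_jmult add_defect_def
    by (simp add: jmult_linear vs.scale_right_distrib vs.scale_right_diff_distrib algebra_simps)
  then show ?thesis using K_pos by simp
qed

lemma jmult_add_defect_eq_0: "c \<bullet> a = 0 \<or> c \<bullet> b = 0 \<Longrightarrow> c \<bullet> add_defect a b = 0"
  by (rule jmult_add_defect) auto

lemma add_defect_jmult_eq_0: "a \<bullet> c = 0 \<or> b \<bullet> c = 0 \<Longrightarrow> add_defect a b \<bullet> c = 0"
  by (rule add_defect_jmult) auto

lemma additive_12_21:
  assumes "peirce 1 0 a" "peirce 0 1 b" shows "\<Phi> (a + b) = \<Phi> a + \<Phi> b"
proof -
  let ?t = "add_defect a b"
  have "(e + e - one) \<bullet> ?t = 0"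
    by (rule jmult_add_defect_eq_0) (simp add: reflection_jmult assms)
  moreover have "?t \<bullet> e = 0"
    by (rule add_defect_jmult_eq_0) (simp add: jmult_e assms)
  moreover have "?t \<bullet> (one - e) = 0"
    by (rule add_defect_jmult_eq_0) (simp add: jmult_one_minus_e assms)
  ultimately have "?t = 0"
    by (blast intro: eq_0_if_projs_eq_0
        dest: reflection_jmult_eq_0D jmult_e_eq_0D jmult_one_minus_e_eq_0D)
  then show ?thesis by (simp add: add_defect_eq_0_iff)
qed

lemma additive_11_offdiag:
  assumes "peirce 1 1 a" "peirce 1 0 b" "peirce 0 1 c"
  shows "\<Phi> (a + (b + c)) = \<Phi> a + \<Phi> (b + c)"
proof -
  let ?t = "add_defect a (b + c)"
  have "(one - e) \<bullet> ?t = 0"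
    by (rule jmult_add_defect_eq_0) (simp add: one_minus_e_jmult assms)
  moreover have "(e + e - one) \<bullet> ?t = 0"
    by (rule jmult_add_defect_eq_0) (simp add: reflection_jmult assms proj_add)
  ultimately have "?t = 0"
    by (blast intro: eq_0_if_projs_eq_0 dest: one_minus_e_jmult_eq_0D reflection_jmult_eq_0D)
  then show ?thesis by (simp add: add_defect_eq_0_iff)
qed

lemma additive_11_22:
  assumes "peirce 1 1 a" "peirce 0 0 d" shows "\<Phi> (a + d) = \<Phi> a + \<Phi> d"
proof -
  let ?t = "add_defect a d"
  have "(one - e) \<bullet> ?t = 0"
    by (rule jmult_add_defect_eq_0) (simp add: one_minus_e_jmult assms)
  moreover have "e \<bullet> ?t = 0"
    by (rule jmult_add_defect_eq_0) (simp add: e_jmult assms)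
  ultimately have "?t = 0"
    by (blast intro: eq_0_if_projs_eq_0 dest: one_minus_e_jmult_eq_0D e_jmult_eq_0D)
  then show ?thesis by (simp add: add_defect_eq_0_iff)
qed

lemma additive_peirce_sum:
  assumes "peirce 1 1 a" "peirce 1 0 b" "peirce 0 1 c" "peirce 0 0 d"
  shows "\<Phi> (a + b + c + d) = \<Phi> a + \<Phi> b + \<Phi> c + \<Phi> d"
proof -
  let ?t = "\<Phi> (a + b + c + d) - (\<Phi> a + \<Phi> b + \<Phi> c + \<Phi> d)"
  have sum_11_22: "add_defect (a + d) (b + c) = ?t"
    using additive_11_22[OF assms(1,4)] additive_12_21[OF assms(2,3)]
    by (simp add: add_defect_def algebra_simps)
  have sum_offdiag_22: "add_defect (a + (b + c)) d = ?t"
    using additive_11_offdiag[OF assms(1,2,3)] additive_12_21[OF assms(2,3)]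
    by (simp add: add_defect_def algebra_simps)
  have "(e + e - one) \<bullet> ?t = 0"
    unfolding sum_11_22[symmetric]
    by (rule jmult_add_defect_eq_0) (simp add: reflection_jmult assms proj_add)
  moreover have "e \<bullet> ?t = 0"
    unfolding sum_offdiag_22[symmetric]
    by (rule jmult_add_defect_eq_0) (simp add: e_jmult assms)
  ultimately have "?t = 0"
    by (blast intro: eq_0_if_projs_eq_0 dest: reflection_jmult_eq_0D e_jmult_eq_0D)
  then show ?thesis by simp
qed

lemma Phi_peirce_decomp: "\<Phi> x = \<Phi> (p11 x) + \<Phi> (p12 x) + \<Phi> (p21 x) + \<Phi> (p22 x)"
  using additive_peirce_sum[OF peirce_p11 peirce_p12 peirce_p21 peirce_p22, of x x x x]
    by (simp flip: peirce_decomp)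

lemma add_defect_peirce_12:
  assumes "peirce 1 0 a" "peirce 1 0 b"
  shows "p11 (add_defect a b) = 0" "p21 (add_defect a b) = 0" "p22 (add_defect a b) = 0"
proof -
  have "(e + e - one) \<bullet> add_defect a b = 0"
    by (rule jmult_add_defect_eq_0) (simp add: reflection_jmult assms)
  then show "p11 (add_defect a b) = 0" "p22 (add_defect a b) = 0"
    by (rule reflection_jmult_eq_0D)+
  have "add_defect a b \<bullet> e = 0"
    by (rule add_defect_jmult_eq_0) (simp add: jmult_e assms)
  then show "p21 (add_defect a b) = 0" by (rule jmult_e_eq_0D)
qed

lemma add_defect_peirce_21:
  assumes "peirce 0 1 a" "peirce 0 1 b"
  shows "p12 (add_defect a b) = 0"
proof -
  have "add_defect a b \<bullet> (one - e) = 0"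
    by (rule add_defect_jmult_eq_0) (simp add: jmult_one_minus_e assms)
  then show ?thesis by (rule jmult_one_minus_e_eq_0D)
qed

lemma Phi_scaled_jmult_add:
  assumes "\<Phi> (x1 + x2) = \<Phi> x1 + \<Phi> x2" "\<Phi> (y1 + y2) = \<Phi> y1 + \<Phi> y2"
  shows "\<Phi> (sc (of_nat K) ((x1 + x2) \<bullet> (y1 + y2))) =
    \<Phi> (sc (of_nat K) (x1 \<bullet> y1)) + \<Phi> (sc (of_nat K) (x1 \<bullet> y2))
    + \<Phi> (sc (of_nat K) (x2 \<bullet> y1)) + \<Phi> (sc (of_nat K) (x2 \<bullet> y2))"
  unfolding Phi_scaled_jmult using assms by (simp add: jmult_linear vs.scale_right_distrib algebra_simps)

text \<open>For \<open>p = K a\<close>, \<open>q = K b\<close> in \<open>A\<^sub>1\<^sub>2\<close>, expand \<open>\<Phi> (K ((e + a) \<bullet> ((one - e) + b)))\<close> once by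
  bilinearity and once along the Peirce decomposition
  \<open>(e + a) \<bullet> ((one - e) + b) = b \<cdot> a\<^sup>* + (a + b) + (a\<^sup>* + a \<cdot> b)\<close>: the defect of \<open>p, q\<close>, which lies in
  \<open>A\<^sub>1\<^sub>2\<close>, is minus the defect of two elements of \<open>A\<^sub>2\<^sub>1\<close>, which has no \<open>A\<^sub>1\<^sub>2\<close>-component.\<close>

lemma additive_12:
  assumes p: "peirce 1 0 p" and q: "peirce 1 0 q" shows "\<Phi> (p + q) = \<Phi> p + \<Phi> q"
proof -
  let ?K = "sc (of_nat K)"
  define a b where "a = sc (inverse (of_nat K)) p" and "b = sc (inverse (of_nat K)) q"
  have pa: "?K a = p" and qb: "?K b = q"
    using K_pos by (simp_all add: a_def b_def)
  have a: "peirce 1 0 a" and b: "peirce 1 0 b"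
    using p q by (simp_all add: a_def b_def peirce_scale)
  have a': "peirce 0 1 (?K (star a))"
    using peirce_scale[OF peirce_star[OF a]] by simp
  have ab: "peirce 0 1 (?K (a \<cdot> b))"
    using peirce_scale[OF peirce_mult[OF a b]] by simp
  have ba': "peirce 1 1 (?K (b \<cdot> star a))"
    using peirce_scale[OF peirce_mult[OF b peirce_star[OF a]]] by simp
  have e_b: "e \<bullet> b = b" using b by (simp add: e_jmult)
  have a_1e: "a \<bullet> (one - e) = a + star a" using a by (simp add: jmult_one_minus_e)
  have e_1e: "e \<bullet> (one - e) = 0"
    using peirce_one_minus_e by (simp add: e_jmult)
  have "?K ((e + a) \<bullet> ((one - e) + b)) = ?K (b \<cdot> star a) + (p + q) + (?K (star a) + ?K (a \<cdot> b)) + 0"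
    unfolding jmult_add_left jmult_add_right e_b a_1e e_1e jmult_def[of a b]
    by (simp add: vs.scale_right_distrib pa qb add_ac)
  then have "\<Phi> (?K ((e + a) \<bullet> ((one - e) + b))) = \<Phi> (?K (b \<cdot> star a)) + \<Phi> (p + q)
      + \<Phi> (?K (star a) + ?K (a \<cdot> b))"
    using additive_peirce_sum[OF ba' peirce_add[OF p q] peirce_add[OF a' ab] peirce_zero] by simp
  moreover have "\<Phi> (?K ((e + a) \<bullet> ((one - e) + b))) = \<Phi> q + (\<Phi> p + \<Phi> (?K (star a)))
      + (\<Phi> (?K (b \<cdot> star a)) + \<Phi> (?K (a \<cdot> b)))"
  proof -
    have "\<Phi> (e + a) = \<Phi> e + \<Phi> a"
      using additive_peirce_sum[OF peirce_e a peirce_zero peirce_zero] by simp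
    moreover have "\<Phi> ((one - e) + b) = \<Phi> (one - e) + \<Phi> b"
      using additive_peirce_sum[OF peirce_zero b peirce_zero peirce_one_minus_e] by (simp add: add.commute)
    moreover have "\<Phi> (?K (a \<bullet> (one - e))) = \<Phi> p + \<Phi> (?K (star a))"
      unfolding a_1e vs.scale_right_distrib pa by (rule additive_12_21[OF p a'])
    moreover have "\<Phi> (?K (a \<bullet> b)) = \<Phi> (?K (b \<cdot> star a)) + \<Phi> (?K (a \<cdot> b))"
      using additive_peirce_sum[OF ba' peirce_zero ab peirce_zero]
      by (simp add: jmult_def vs.scale_right_distrib add_ac)
    ultimately show ?thesis
      using Phi_scaled_jmult_add[of e a "one - e" b] by (simp add: e_1e e_b qb)
  qed
  ultimately have sum: "add_defect p q + add_defect (?K (star a)) (?K (a \<cdot> b)) = 0"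
    unfolding add_defect_def by (simp add: algebra_simps)
  have "p12 (add_defect p q) = 0"
    using arg_cong[OF sum, of p12] add_defect_peirce_21[OF a' ab] by (simp add: proj_add)
  then have "add_defect p q = 0"
    using add_defect_peirce_12[OF p q] by (blast intro: eq_0_if_projs_eq_0)
  then show ?thesis by (simp add: add_defect_eq_0_iff)
qed

lemma eq_0_if_mult_peirce_12_eq_0:
  assumes z: "peirce 1 1 z" and annihilates: "\<And>c. peirce 1 0 c \<Longrightarrow> z \<cdot> c = 0"
  shows "z = 0"
proof (rule faithful_one_minus_e, rule allI)
  fix a
  have "z \<cdot> a = z \<cdot> p11 a + z \<cdot> p12 a + z \<cdot> p21 a + z \<cdot> p22 a"
    by (subst peirce_decomp[of a]) (simp add: distrib_left)
  also have "z \<cdot> p12 a = 0" by (rule annihilates[OF peirce_p12])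
  also have "z \<cdot> p21 a = 0" by (rule peirce_mult_eq_0[OF z peirce_p21]) simp
  also have "z \<cdot> p22 a = 0" by (rule peirce_mult_eq_0[OF z peirce_p22]) simp
  finally have "z \<cdot> a = z \<cdot> p11 a" by simp
  moreover have "peirce 1 1 (z \<cdot> p11 a)" using peirce_mult[OF z peirce_p11] by simp
  ultimately show "(z \<cdot> a) \<cdot> (one - e) = 0" unfolding peirce_def by (simp add: mult_diff)
qed

lemma additive_11:
  assumes a: "peirce 1 1 a" and b: "peirce 1 1 b" shows "\<Phi> (a + b) = \<Phi> a + \<Phi> b"
proof -
  let ?t = "add_defect a b"
  have "(one - e) \<bullet> ?t = 0"
    by (rule jmult_add_defect_eq_0) (simp add: one_minus_e_jmult a)
  then have t: "peirce 1 1 ?t"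
    using peirce_decomp[of ?t] peirce_p11[of ?t] by (simp add: one_minus_e_jmult_eq_0D)
  have jmult_eq_mult: "x \<bullet> c = x \<cdot> c" if "peirce 1 1 x" "peirce 1 0 c" for x c
    using peirce_mult_eq_0[OF that(2) peirce_star[OF that(1)]] by (simp add: jmult_def)
  have "?t \<cdot> c = 0" if c: "peirce 1 0 c" for c
  proof -
    have "peirce 1 0 (a \<cdot> c)" "peirce 1 0 (b \<cdot> c)"
      using peirce_mult[OF a c] peirce_mult[OF b c] by simp_all
    then have "?t \<bullet> c = 0"
      by (intro add_defect_jmult)
        (simp add: jmult_eq_mult[OF a c] jmult_eq_mult[OF b c] additive_12 peirce_scale)
    then show ?thesis using jmult_eq_mult[OF t c] by simp
  qed
  then have "?t = 0" by (rule eq_0_if_mult_peirce_12_eq_0[OF t])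
  then show ?thesis by (simp add: add_defect_eq_0_iff)
qed

lemma additive_21: "peirce 0 1 p \<Longrightarrow> peirce 0 1 q \<Longrightarrow> \<Phi> (p + q) = \<Phi> p + \<Phi> q"
proof -
  interpret complement: scaled_jordan_identity sc "(\<cdot>)" star one "one - e" \<Phi> K U \<alpha> \<beta>
    by (rule scaled_jordan_identity_one_minus_e)
  show "peirce 0 1 p \<Longrightarrow> peirce 0 1 q \<Longrightarrow> ?thesis"
    unfolding peirce_def by (rule complement.additive_12) (simp_all add: complement.peirce_def mult_linear)
qed

lemma additive_22: "peirce 0 0 p \<Longrightarrow> peirce 0 0 q \<Longrightarrow> \<Phi> (p + q) = \<Phi> p + \<Phi> q"
proof -
  interpret complement: scaled_jordan_identity sc "(\<cdot>)" star one "one - e" \<Phi> K U \<alpha> \<beta>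
    by (rule scaled_jordan_identity_one_minus_e)
  show "peirce 0 0 p \<Longrightarrow> peirce 0 0 q \<Longrightarrow> ?thesis"
    unfolding peirce_def by (rule complement.additive_11) (simp_all add: complement.peirce_def mult_linear)
qed

lemma additive: "\<Phi> (x + y) = \<Phi> x + \<Phi> y"
proof -
  have "\<Phi> (x + y) = \<Phi> (p11 x + p11 y) + \<Phi> (p12 x + p12 y) + \<Phi> (p21 x + p21 y) + \<Phi> (p22 x + p22 y)"
    using Phi_peirce_decomp[of "x + y"] by (simp add: proj_add)
  also have "\<dots> = (\<Phi> (p11 x) + \<Phi> (p12 x) + \<Phi> (p21 x) + \<Phi> (p22 x))
      + (\<Phi> (p11 y) + \<Phi> (p12 y) + \<Phi> (p21 y) + \<Phi> (p22 y))"
    by (simp add: additive_11 additive_12 additive_21 additive_22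
        peirce_p11 peirce_p12 peirce_p21 peirce_p22 algebra_simps)
  also have "\<dots> = \<Phi> x + \<Phi> y"
    using Phi_peirce_decomp[of x] Phi_peirce_decomp[of y] by simp
  finally show ?thesis .
qed

section \<open>Jordan \<open>*\<close>-derivation\<close>

lemma Phi_minus: "\<Phi> (- x) = - \<Phi> x"
  using additive[of x "- x"] by (simp add: add_eq_0_iff)

lemma Phi_diff: "\<Phi> (x - y) = \<Phi> x - \<Phi> y"
  using additive[of x "- y"] by (simp add: Phi_minus)

lemma Phi_scale_of_nat: "\<Phi> (sc (of_nat k) x) = sc (of_nat k) (\<Phi> x)"
  by (induction k) (simp_all add: vs.scale_left_distrib additive)

lemma Phi_scale_of_int: "\<Phi> (sc (of_int k) x) = sc (of_int k) (\<Phi> x)"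
  by (cases k rule: int_cases2) (simp_all add: Phi_scale_of_nat Phi_minus vs.scale_minus_left)

lemma scaled_jmult_defect: "sc (of_nat K) (\<Phi> (x \<bullet> y) - \<Phi> x \<bullet> y - x \<bullet> \<Phi> y) = (U \<bullet> x) \<bullet> y"
  using Phi_scaled_jmult[of x y] unfolding Phi_scale_of_nat
  by (simp add: vs.scale_right_diff_distrib algebra_simps)

text \<open>With \<open>x = y = one\<close>, \<open>v = \<Phi> one + (\<Phi> one)\<^sup>*\<close> satisfies \<open>(K + 2 \<alpha> + 2 \<beta>) v = 0\<close>.\<close>

lemma star_Phi_one: "star (\<Phi> one) = - \<Phi> one"
proof -
  let ?w = "\<Phi> one"
  define v where "v = ?w + star ?w"
  define c where "c = \<alpha> + \<beta>"
  have U_star_U: "U + star U = sc (of_nat c) v"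
    unfolding U_eq v_def c_def
    by (simp add: star_add star_scale_of_nat vs.scale_right_distrib vs.scale_left_distrib add_ac)
  have "sc (of_nat K) (\<Phi> (one + one) - (?w + star ?w) - (?w + ?w)) = (U + star U) + (U + star U)"
    using scaled_jmult_defect[of one one] by (simp add: jmult_def star_add add_ac)
  moreover have "\<Phi> (one + one) - (?w + star ?w) - (?w + ?w) = - v"
    by (simp add: v_def additive algebra_simps)
  ultimately have "sc (of_nat K) (- v) = sc (of_nat c) v + sc (of_nat c) v"
    by (simp only: U_star_U)
  then have "sc (of_nat K) v + sc (of_nat c) v + sc (of_nat c) v = 0"
    by (metis add.assoc add.right_inverse vs.scale_minus_right)
  then have "sc (of_nat (K + c + c)) v = 0"
    by (simp only: of_nat_add vs.scale_left_distrib)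
  moreover have "(of_nat (K + c + c) :: complex) \<noteq> 0"
    using K_pos by (simp only: of_nat_eq_0_iff)
  ultimately have "v = 0" using vs.scale_eq_0_iff by blast
  then show ?thesis unfolding v_def by (simp add: add_eq_0_iff)
qed

lemma U_add_star_U: "U + star U = 0"
  unfolding U_eq by (simp add: star_add star_diff star_scale_of_nat star_Phi_one vs.scale_minus_right)

lemma Phi_one_commute: "\<Phi> one \<cdot> y = y \<cdot> \<Phi> one"
proof -
  have "sc (of_nat K) (\<Phi> (y + y) - \<Phi> one \<bullet> y - (\<Phi> y + \<Phi> y)) = (U + star U) \<bullet> y"
    using scaled_jmult_defect[of one y] by (simp add: jmult_def)
  then have "\<Phi> one \<bullet> y = 0"
    unfolding U_add_star_U additive using K_pos by simp
  then show ?thesis by (simp add: jmult_def star_Phi_one mult_minus add_eq_0_iff)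
qed

lemma U_jmult: "U \<bullet> x = 0"
proof -
  have "U \<cdot> x = x \<cdot> U"
    by (simp add: U_eq star_Phi_one mult_linear Phi_one_commute)
  moreover have "star U = - U" using U_add_star_U by (simp add: add_eq_0_iff)
  ultimately show ?thesis by (simp add: jmult_def mult_minus)
qed

lemma Phi_jmult: "\<Phi> (x \<bullet> y) = \<Phi> x \<bullet> y + x \<bullet> \<Phi> y"
  using scaled_jmult_defect[of x y] K_pos by (simp add: U_jmult diff_eq_eq add.commute)

lemma proj_mult_peirce:
  assumes "peirce i j a" "peirce k l b"
  shows "p11 (a \<cdot> b) = (if i + j - k = 1 \<and> k + l - j = 1 then a \<cdot> b else 0)"
    and "p12 (a \<cdot> b) = (if i + j - k = 1 \<and> k + l - j = 0 then a \<cdot> b else 0)"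
    and "p21 (a \<cdot> b) = (if i + j - k = 0 \<and> k + l - j = 1 then a \<cdot> b else 0)"
    and "p22 (a \<cdot> b) = (if i + j - k = 0 \<and> k + l - j = 0 then a \<cdot> b else 0)"
proof -
  consider "i + j - k \<in> {0, 1}" "k + l - j \<in> {0, 1}" | "a \<cdot> b = 0"
    using peirce_mult_eq_0[OF assms] by blast
  then have "(p11 (a \<cdot> b) = (if i + j - k = 1 \<and> k + l - j = 1 then a \<cdot> b else 0)) \<and>
    (p12 (a \<cdot> b) = (if i + j - k = 1 \<and> k + l - j = 0 then a \<cdot> b else 0)) \<and>
    (p21 (a \<cdot> b) = (if i + j - k = 0 \<and> k + l - j = 1 then a \<cdot> b else 0)) \<and>
    (p22 (a \<cdot> b) = (if i + j - k = 0 \<and> k + l - j = 0 then a \<cdot> b else 0))"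
  proof cases
    case 1
    with peirce_mult[OF assms] show ?thesis by auto
  qed simp
  then show "p11 (a \<cdot> b) = (if i + j - k = 1 \<and> k + l - j = 1 then a \<cdot> b else 0)"
    "p12 (a \<cdot> b) = (if i + j - k = 1 \<and> k + l - j = 0 then a \<cdot> b else 0)"
    "p21 (a \<cdot> b) = (if i + j - k = 0 \<and> k + l - j = 1 then a \<cdot> b else 0)"
    "p22 (a \<cdot> b) = (if i + j - k = 0 \<and> k + l - j = 0 then a \<cdot> b else 0)" by blast+
qed

lemma p11_Phi_one: "p11 (\<Phi> one) = 0"
proof -
  let ?w = "\<Phi> one" and ?f = "\<Phi> e"
  have star_f: "star ?f = ?f - (e \<cdot> ?w + e \<cdot> ?w)"
    using Phi_jmult[of e one] by (simp add: jmult_def Phi_one_commute additive algebra_simps)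
  have "?f + ?f = ?f \<cdot> e + e \<cdot> star ?f + (e \<cdot> ?f + ?f \<cdot> e)"
    using Phi_jmult[of e e] by (simp add: jmult_def additive)
  then have "sc 2 ?f = sc 2 (?f \<cdot> e + e \<cdot> ?f - e \<cdot> ?w)"
    unfolding star_f by (simp add: mult_linear add_self_eq_scale_2[symmetric] algebra_simps)
  then have f: "?f = ?f \<cdot> e + e \<cdot> ?f - e \<cdot> ?w" by simp
  have p22_f: "p22 ?f = 0"
    using arg_cong[OF f, of p22] by (simp add: proj_linear e_mult_eq mult_e_eq)
  have p11_f: "p11 ?f = p11 ?w"
    using arg_cong[OF f, of p11] by (simp add: proj_linear e_mult_eq mult_e_eq)
  have "p11 ?w \<cdot> x = 0" if x: "peirce 1 0 x" for x
  proof -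
    have "e \<bullet> x = x" using x by (simp add: e_jmult)
    then have "\<Phi> x = ?f \<cdot> x + x \<cdot> star ?f + e \<bullet> \<Phi> x"
      using Phi_jmult[of e x] by (simp add: jmult_def[of ?f])
    moreover have "p12 (e \<bullet> g) = p12 g" for g
      by (simp add: e_jmult proj_linear)
    ultimately have "p12 (\<Phi> x) = p12 (?f \<cdot> x) + p12 (x \<cdot> star ?f) + p12 (\<Phi> x)"
      by (metis proj_add(2))
    then have "p12 (?f \<cdot> x) + p12 (x \<cdot> star ?f) = 0"
      by (simp add: algebra_simps)
    moreover have "p12 (?f \<cdot> x) = p11 ?f \<cdot> x"
      by (subst peirce_decomp[of ?f])
        (simp add: distrib_right proj_add p22_f proj_mult_peirce[OF peirce_p11 x]
          proj_mult_peirce[OF peirce_p12 x] proj_mult_peirce[OF peirce_p21 x])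
    moreover have "p12 (x \<cdot> star ?f) = 0"
    proof -
      let ?g = "star ?f"
      have "p12 (x \<cdot> ?g) = p12 (x \<cdot> p11 ?g) + p12 (x \<cdot> p12 ?g) + p12 (x \<cdot> p21 ?g) + p12 (x \<cdot> p22 ?g)"
        by (subst (1) peirce_decomp[of ?g]) (simp add: distrib_left proj_add)
      also have "\<dots> = 0"
        using proj_mult_peirce(2)[OF x peirce_p11, of ?g] proj_mult_peirce(2)[OF x peirce_p12, of ?g]
          proj_mult_peirce(2)[OF x peirce_p21, of ?g]
        by (simp add: proj_star p22_f)
      finally show ?thesis .
    qed
    ultimately show ?thesis using p11_f by simp
  qed
  then show ?thesis using eq_0_if_mult_peirce_12_eq_0[OF peirce_p11] by blast
qed

lemma Phi_one [simp]: "\<Phi> one = 0"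
proof -
  interpret complement: scaled_jordan_identity sc "(\<cdot>)" star one "one - e" \<Phi> K U \<alpha> \<beta>
    by (rule scaled_jordan_identity_one_minus_e)
  have "complement.p11 x = p22 x" for x
    unfolding complement.p11_def p22_def by (simp add: mult_linear algebra_simps)
  then have "p22 (\<Phi> one) = 0" using complement.p11_Phi_one by simp
  moreover have "p12 (\<Phi> one) = 0" "p21 (\<Phi> one) = 0"
    unfolding p12_def p21_def Phi_one_commute[of e, symmetric] by simp_all
  ultimately show ?thesis using p11_Phi_one by (blast intro: eq_0_if_projs_eq_0)
qed

lemma Phi_star: "\<Phi> (star x) = star (\<Phi> x)"
  using Phi_jmult[of x one] by (simp add: jmult_def additive)

section \<open>Multiplicativity\<close>

definition der_defect :: "'a \<Rightarrow> 'a \<Rightarrow> 'a" where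
  "der_defect a b = \<Phi> (a \<cdot> b) - \<Phi> a \<cdot> b - a \<cdot> \<Phi> b"

lemma der_defect_add_left: "der_defect (a + a') b = der_defect a b + der_defect a' b"
  and der_defect_add_right: "der_defect a (b + b') = der_defect a b + der_defect a b'"
  and der_defect_diff_left: "der_defect (a - a') b = der_defect a b - der_defect a' b"
  and der_defect_scale_of_int_left: "der_defect (sc (of_int k) a) b = sc (of_int k) (der_defect a b)"
  and der_defect_scale_of_int_right: "der_defect a (sc (of_int k) b) = sc (of_int k) (der_defect a b)"
  unfolding der_defect_def
  by (simp_all add: additive Phi_diff Phi_scale_of_int mult_linear vs.scale_right_diff_distrib
      algebra_simps)

lemma der_defect_zero_right [simp]: "der_defect a 0 = 0"
  and der_defect_one_left [simp]: "der_defect one b = 0"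
  by (simp_all add: der_defect_def)

lemma der_defect_jmult: "der_defect a b + der_defect b (star a) = 0"
  using Phi_jmult[of a b] unfolding der_defect_def by (simp add: jmult_def additive Phi_star algebra_simps)

text \<open>Apply the additive \<open>\<Phi>\<close> to the linearized alternative laws.\<close>

lemma der_defect_left_alternative:
  "der_defect x y \<cdot> z + der_defect (x \<cdot> y) z - x \<cdot> der_defect y z - der_defect x (y \<cdot> z)
   + (der_defect y x \<cdot> z + der_defect (y \<cdot> x) z - y \<cdot> der_defect x z - der_defect y (x \<cdot> z)) = 0"
proof -
  have "\<Phi> ((x \<cdot> y) \<cdot> z) - \<Phi> (x \<cdot> (y \<cdot> z)) + (\<Phi> ((y \<cdot> x) \<cdot> z) - \<Phi> (y \<cdot> (x \<cdot> z))) = 0"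
    using arg_cong[OF left_alternative_linear[of x y z], of \<Phi>] by (simp add: additive Phi_diff)
  moreover have "der_defect x y \<cdot> z + der_defect (x \<cdot> y) z - x \<cdot> der_defect y z - der_defect x (y \<cdot> z)
   + (der_defect y x \<cdot> z + der_defect (y \<cdot> x) z - y \<cdot> der_defect x z - der_defect y (x \<cdot> z)) =
    (\<Phi> ((x \<cdot> y) \<cdot> z) - \<Phi> (x \<cdot> (y \<cdot> z)) + (\<Phi> ((y \<cdot> x) \<cdot> z) - \<Phi> (y \<cdot> (x \<cdot> z))))
    - ((\<Phi> x \<cdot> y) \<cdot> z - \<Phi> x \<cdot> (y \<cdot> z) + ((y \<cdot> \<Phi> x) \<cdot> z - y \<cdot> (\<Phi> x \<cdot> z)))
    - ((x \<cdot> \<Phi> y) \<cdot> z - x \<cdot> (\<Phi> y \<cdot> z) + ((\<Phi> y \<cdot> x) \<cdot> z - \<Phi> y \<cdot> (x \<cdot> z)))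
    - ((x \<cdot> y) \<cdot> \<Phi> z - x \<cdot> (y \<cdot> \<Phi> z) + ((y \<cdot> x) \<cdot> \<Phi> z - y \<cdot> (x \<cdot> \<Phi> z)))"
    unfolding der_defect_def by (simp add: mult_linear algebra_simps)
  ultimately show ?thesis by (simp add: left_alternative_linear)
qed

lemma der_defect_right_alternative:
  "der_defect a b \<cdot> c + der_defect (a \<cdot> b) c - a \<cdot> der_defect b c - der_defect a (b \<cdot> c)
   + (der_defect a c \<cdot> b + der_defect (a \<cdot> c) b - a \<cdot> der_defect c b - der_defect a (c \<cdot> b)) = 0"
proof -
  have "\<Phi> ((a \<cdot> b) \<cdot> c) - \<Phi> (a \<cdot> (b \<cdot> c)) + (\<Phi> ((a \<cdot> c) \<cdot> b) - \<Phi> (a \<cdot> (c \<cdot> b))) = 0"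
    using arg_cong[OF right_alternative_linear[of a b c], of \<Phi>] by (simp add: additive Phi_diff)
  moreover have "der_defect a b \<cdot> c + der_defect (a \<cdot> b) c - a \<cdot> der_defect b c - der_defect a (b \<cdot> c)
   + (der_defect a c \<cdot> b + der_defect (a \<cdot> c) b - a \<cdot> der_defect c b - der_defect a (c \<cdot> b)) =
    (\<Phi> ((a \<cdot> b) \<cdot> c) - \<Phi> (a \<cdot> (b \<cdot> c)) + (\<Phi> ((a \<cdot> c) \<cdot> b) - \<Phi> (a \<cdot> (c \<cdot> b))))
    - ((\<Phi> a \<cdot> b) \<cdot> c - \<Phi> a \<cdot> (b \<cdot> c) + ((\<Phi> a \<cdot> c) \<cdot> b - \<Phi> a \<cdot> (c \<cdot> b)))
    - ((a \<cdot> \<Phi> b) \<cdot> c - a \<cdot> (\<Phi> b \<cdot> c) + ((a \<cdot> c) \<cdot> \<Phi> b - a \<cdot> (c \<cdot> \<Phi> b)))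
    - ((a \<cdot> b) \<cdot> \<Phi> c - a \<cdot> (b \<cdot> \<Phi> c) + ((a \<cdot> \<Phi> c) \<cdot> b - a \<cdot> (\<Phi> c \<cdot> b)))"
    unfolding der_defect_def by (simp add: mult_linear algebra_simps)
  ultimately show ?thesis by (simp add: right_alternative_linear)
qed

lemma der_defect_e_e: "der_defect e e = 0"
  using der_defect_jmult[of e e] by (simp add: add_self_eq_0_iff)

lemma der_defect_swap_e: "der_defect x e = - der_defect e x"
  using der_defect_jmult[of e x] by (simp add: add_eq_0_iff)

lemma der_defect_e_star: "der_defect e (star x) = der_defect e x"
  using der_defect_jmult[of x e] der_defect_swap_e[of x] by (simp add: add_eq_0_iff)

lemma e_mult_der_defect_e: "e \<cdot> der_defect e z = der_defect e z - der_defect e (e \<cdot> z)"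
proof -
  have "(der_defect e z - e \<cdot> der_defect e z - der_defect e (e \<cdot> z))
      + (der_defect e z - e \<cdot> der_defect e z - der_defect e (e \<cdot> z)) = 0"
    using der_defect_left_alternative[of e e z] by (simp add: der_defect_e_e algebra_simps)
  then show ?thesis by (simp only: add_self_eq_0_iff) (simp add: algebra_simps)
qed

lemma der_defect_e_mult_e: "der_defect a e \<cdot> e = der_defect a e - der_defect (a \<cdot> e) e"
proof -
  have "(der_defect a e \<cdot> e + der_defect (a \<cdot> e) e - der_defect a e)
      + (der_defect a e \<cdot> e + der_defect (a \<cdot> e) e - der_defect a e) = 0"
    using der_defect_right_alternative[of a e e] by (simp add: der_defect_e_e algebra_simps)
  then show ?thesis by (simp only: add_self_eq_0_iff) (simp add: algebra_simps)
qed

lemma der_defect_e_eigen: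
  assumes "peirce i j x"
  shows "e \<cdot> der_defect e x = sc (of_int (1 - i)) (der_defect e x)"
    and "der_defect e x \<cdot> e = sc (of_int (1 - j)) (der_defect e x)"
proof -
  from assms have ex: "e \<cdot> x = sc (of_int i) x" and xe: "x \<cdot> e = sc (of_int j) x"
    by (simp_all add: peirce_def)
  show "e \<cdot> der_defect e x = sc (of_int (1 - i)) (der_defect e x)"
    unfolding e_mult_der_defect_e ex der_defect_scale_of_int_right
    by (simp add: vs.scale_left_diff_distrib)
  have "der_defect x e \<cdot> e = sc (of_int (1 - j)) (der_defect x e)"
    unfolding der_defect_e_mult_e xe der_defect_scale_of_int_left
    by (simp add: vs.scale_left_diff_distrib)
  then show "der_defect e x \<cdot> e = sc (of_int (1 - j)) (der_defect e x)"
    unfolding der_defect_swap_e by (simp add: minus_mult vs.scale_minus_right)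
qed

text \<open>\<open>der_defect e\<close> does not see \<open>*\<close>, but \<open>*\<close> swaps the labels \<open>i, j\<close> of a Peirce space.\<close>

lemma der_defect_e_offdiag:
  assumes "peirce i j x" "i \<noteq> j" shows "der_defect e x = 0"
proof -
  have "e \<cdot> der_defect e x = sc (of_int (1 - i)) (der_defect e x)"
    by (rule der_defect_e_eigen(1)[OF assms(1)])
  moreover have "e \<cdot> der_defect e x = sc (of_int (1 - j)) (der_defect e x)"
    using der_defect_e_eigen(1)[OF peirce_star[OF assms(1)]] by (simp only: der_defect_e_star)
  ultimately show ?thesis using assms(2) by simp
qed

lemma der_defect_e_peirce_11:
  assumes y: "peirce 1 1 y" shows "der_defect e y = 0"
proof -
  let ?f = "\<Phi> e"
  have "peirce 0 0 (der_defect e y)"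
    using der_defect_e_eigen[OF y] unfolding peirce_def by simp
  moreover have "p22 (der_defect e y) = 0"
  proof -
    have ey: "e \<cdot> y = y" and ye: "y \<cdot> e = y" using y by (simp_all add: peirce_def)
    have "p22 (?f \<cdot> y) = 0"
      using proj_mult_peirce(4)[OF peirce_p11 y, of ?f] proj_mult_peirce(4)[OF peirce_p12 y, of ?f]
        proj_mult_peirce(4)[OF peirce_p21 y, of ?f] proj_mult_peirce(4)[OF peirce_p22 y, of ?f]
      by (subst peirce_decomp[of ?f]) (simp add: distrib_right proj_add)
    then have left: "p22 (der_defect e y) = p22 (\<Phi> y)"
      unfolding der_defect_def ey by (simp add: proj_linear e_mult_eq)
    have "p22 (y \<cdot> ?f) = 0"
      using proj_mult_peirce(4)[OF y peirce_p11, of ?f] proj_mult_peirce(4)[OF y peirce_p12, of ?f]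
        proj_mult_peirce(4)[OF y peirce_p21, of ?f] proj_mult_peirce(4)[OF y peirce_p22, of ?f]
      by (subst peirce_decomp[of ?f]) (simp add: distrib_left proj_add)
    then have right: "p22 (der_defect y e) = p22 (\<Phi> y)"
      unfolding der_defect_def ye by (simp add: proj_linear mult_e_eq)
    have "p22 (\<Phi> y) = - p22 (\<Phi> y)"
      using left right by (simp add: der_defect_swap_e proj_minus)
    then show ?thesis using left by (simp add: eq_neg_iff_add_eq_0 add_self_eq_0_iff)
  qed
  ultimately show ?thesis by simp
qed

lemma der_defect_e_left [simp]: "der_defect e x = 0"
proof -
  interpret complement: scaled_jordan_identity sc "(\<cdot>)" star one "one - e" \<Phi> K U \<alpha> \<beta>
    by (rule scaled_jordan_identity_one_minus_e)
  have "complement.peirce 1 1 (p22 x)"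
    using peirce_p22[of x] unfolding complement.peirce_def peirce_def by (simp add: mult_linear)
  then have "der_defect (one - e) (p22 x) = 0" by (rule complement.der_defect_e_peirce_11)
  then have "der_defect e (p22 x) = 0" by (simp add: der_defect_diff_left)
  moreover have "der_defect e x = der_defect e (p11 x) + der_defect e (p12 x)
      + der_defect e (p21 x) + der_defect e (p22 x)"
    by (subst peirce_decomp[of x]) (simp add: der_defect_add_right)
  ultimately show ?thesis
    using der_defect_e_peirce_11[OF peirce_p11] der_defect_e_offdiag[OF peirce_p12]
      der_defect_e_offdiag[OF peirce_p21] by simp
qed

lemma der_defect_e_right [simp]: "der_defect x e = 0"
  using der_defect_swap_e[of x] by simp

lemma der_defect_peirce_eigen:
  assumes "peirce i j a" "peirce k l b"
  shows "e \<cdot> der_defect a b = sc (of_int (i + j - k)) (der_defect a b)"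
    and "der_defect a b \<cdot> e = sc (of_int (k + l - j)) (der_defect a b)"
proof -
  from assms have ea: "e \<cdot> a = sc (of_int i) a" and ae: "a \<cdot> e = sc (of_int j) a"
    and eb: "e \<cdot> b = sc (of_int k) b" and be: "b \<cdot> e = sc (of_int l) b"
    by (simp_all add: peirce_def)
  have "e \<cdot> der_defect a b = der_defect (e \<cdot> a + a \<cdot> e) b - der_defect a (e \<cdot> b)"
    using der_defect_left_alternative[of e a b] by (simp add: der_defect_add_left algebra_simps)
  then show "e \<cdot> der_defect a b = sc (of_int (i + j - k)) (der_defect a b)"
    unfolding ea ae eb der_defect_add_left der_defect_scale_of_int_left der_defect_scale_of_int_right
    by (simp add: vs.scale_left_distrib vs.scale_left_diff_distrib)
  have "der_defect a b \<cdot> e = der_defect a (b \<cdot> e) - der_defect (a \<cdot> e) b + der_defect a (e \<cdot> b)"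
    using der_defect_right_alternative[of a b e] by (simp add: algebra_simps)
  then show "der_defect a b \<cdot> e = sc (of_int (k + l - j)) (der_defect a b)"
    unfolding ae eb be der_defect_scale_of_int_left der_defect_scale_of_int_right
    by (simp add: vs.scale_left_distrib vs.scale_left_diff_distrib algebra_simps)
qed

text \<open>\<open>der_defect a b\<close> and \<open>- der_defect b a\<^sup>*\<close> (equal by \<open>der_defect_jmult\<close>) get Peirce labels
  that agree only if all four labels of \<open>a\<close> and \<open>b\<close> coincide.\<close>

lemma der_defect_peirce_offdiag:
  assumes a: "peirce i j a" and b: "peirce k l b"
    and labels: "i \<in> {0, 1}" "j \<in> {0, 1}" "k \<in> {0, 1}" "l \<in> {0, 1}"
    and not_diag: "\<not> (i = j \<and> j = k \<and> k = l)"
  shows "der_defect a b = 0"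
proof (rule ccontr)
  let ?z = "der_defect a b" and ?y = "der_defect b (star a)"
  assume nz: "?z \<noteq> 0"
  have zy: "?y = - ?z" using der_defect_jmult[of a b] by (simp add: add_eq_0_iff)
  have a': "peirce j i (star a)" by (rule peirce_star[OF a])
  have "e \<cdot> ?y = sc (of_int (k + l - j)) ?y" by (rule der_defect_peirce_eigen(1)[OF b a'])
  then have "sc (of_int (i + j - k)) ?z = sc (of_int (k + l - j)) ?z"
    unfolding zy der_defect_peirce_eigen(1)[OF a b, symmetric] by (simp add: mult_minus vs.scale_minus_right)
  then have left: "i + j - k = k + l - j" using nz by (metis of_int_eq_iff vs.scale_cancel_right)
  have "?y \<cdot> e = sc (of_int (j + i - l)) ?y" by (rule der_defect_peirce_eigen(2)[OF b a'])
  then have "sc (of_int (k + l - j)) ?z = sc (of_int (j + i - l)) ?z"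
    unfolding zy der_defect_peirce_eigen(2)[OF a b, symmetric] by (simp add: minus_mult vs.scale_minus_right)
  then have right: "k + l - j = j + i - l" using nz by (metis of_int_eq_iff vs.scale_cancel_right)
  show False using left right labels not_diag by auto
qed

lemma der_defect_peirce_11:
  assumes a: "peirce 1 1 a" and b: "peirce 1 1 b" shows "der_defect a b = 0"
proof -
  have "peirce 1 1 (der_defect a b)"
    using der_defect_peirce_eigen[OF a b] unfolding peirce_def by simp
  moreover have "der_defect a b \<cdot> c = 0" if c: "peirce 1 0 c" for c
  proof -
    have ab: "peirce 1 1 (a \<cdot> b)" and bc: "peirce 1 0 (b \<cdot> c)" and ac: "peirce 1 0 (a \<cdot> c)"
      using peirce_mult[OF a b] peirce_mult[OF b c] peirce_mult[OF a c] by simp_all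
    have "der_defect (a \<cdot> b) c = 0" "der_defect a (b \<cdot> c) = 0" "der_defect (a \<cdot> c) b = 0"
      "der_defect b c = 0" "der_defect a c = 0" "der_defect c b = 0"
      by (rule der_defect_peirce_offdiag[OF ab c] der_defect_peirce_offdiag[OF a bc]
          der_defect_peirce_offdiag[OF ac b] der_defect_peirce_offdiag[OF b c]
          der_defect_peirce_offdiag[OF a c] der_defect_peirce_offdiag[OF c b]; simp)+
    moreover have "c \<cdot> b = 0" by (rule peirce_mult_eq_0[OF c b]) simp
    ultimately show ?thesis using der_defect_right_alternative[of a b c] by simp
  qed
  ultimately show ?thesis by (rule eq_0_if_mult_peirce_12_eq_0)
qed

lemma der_defect_peirce_22:
  assumes "peirce 0 0 a" "peirce 0 0 b" shows "der_defect a b = 0"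
proof -
  interpret complement: scaled_jordan_identity sc "(\<cdot>)" star one "one - e" \<Phi> K U \<alpha> \<beta>
    by (rule scaled_jordan_identity_one_minus_e)
  have "complement.peirce 1 1 a" "complement.peirce 1 1 b"
    using assms unfolding complement.peirce_def peirce_def by (simp_all add: mult_linear)
  then show ?thesis by (rule complement.der_defect_peirce_11)
qed

lemma der_defect_peirce:
  assumes "peirce i j a" "peirce k l b" "i \<in> {0, 1}" "j \<in> {0, 1}" "k \<in> {0, 1}" "l \<in> {0, 1}"
  shows "der_defect a b = 0"
  using assms der_defect_peirce_offdiag[OF assms] der_defect_peirce_11 der_defect_peirce_22
  by (cases "i = j \<and> j = k \<and> k = l") auto

lemma der_defect_eq_0: "der_defect a b = 0"
proof -
  have labelled: "\<exists>i\<in>{0, 1}. \<exists>j\<in>{0, 1}. peirce i j x" if "x \<in> {p11 c, p12 c, p21 c, p22 c}" for x c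
    using that peirce_p11 peirce_p12 peirce_p21 peirce_p22 by blast
  have "der_defect x y = 0"
    if "x \<in> {p11 a, p12 a, p21 a, p22 a}" "y \<in> {p11 b, p12 b, p21 b, p22 b}" for x y
    using labelled[OF that(1)] labelled[OF that(2)] der_defect_peirce by blast
  then have "der_defect (p11 a + p12 a + p21 a + p22 a) (p11 b + p12 b + p21 b + p22 b) = 0"
    unfolding der_defect_add_left der_defect_add_right by simp
  then show ?thesis by (simp flip: peirce_decomp)
qed

lemma additive_star_derivation: "additive_star_derivation (\<cdot>) star \<Phi>"
  using additive Phi_star der_defect_eq_0
  unfolding additive_star_derivation_def der_defect_def by (simp add: algebra_simps)

end

section \<open>Multiplying out the leading units\<close>

context alt_star_algebra
begin

lemma jprod_snoc: "xs \<noteq> [] \<Longrightarrow> jprod (\<cdot>) star (xs @ [y]) = jprod (\<cdot>) star xs \<bullet> y"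
  by (cases xs) (simp_all add: jprod_def)

lemma star_scale_power_2: "star (sc (2 ^ j) x) = sc (2 ^ j) (star x)"
  using star_scale_of_nat[of "2 ^ j" x] by simp

lemma scale_power_2_jmult: "sc (2 ^ j) a \<bullet> b = sc (2 ^ j) (a \<bullet> b)"
  using jmult_scale_of_nat_left[of "2 ^ j" a b] by simp

lemma scale_power_2_one_jmult: "sc (2 ^ j) one \<bullet> x = sc (2 ^ Suc j) x"
  by (simp add: jmult_def star_scale_power_2 scale_mult_left scale_mult_right add_self_eq_scale_2)

lemma jprod_replicate_one: "jprod (\<cdot>) star (replicate (Suc j) one) = sc (2 ^ j) one"
proof (induction j)
  case 0
  then show ?case by (simp add: jprod_def)
next
  case (Suc j)
  have "jprod (\<cdot>) star (replicate (Suc (Suc j)) one) = jprod (\<cdot>) star (replicate (Suc j) one) \<bullet> one"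
    by (metis jprod_snoc replicate_Suc replicate_append_same list.distinct(1))
  also have "\<dots> = sc (2 ^ j) one \<bullet> one"
    by (simp only: Suc.IH)
  also have "\<dots> = sc (2 ^ Suc j) one"
    by (rule scale_power_2_one_jmult)
  finally show ?case .
qed

lemma jprod_ones_prefix: "jprod (\<cdot>) star (replicate m one @ [x]) = sc (2 ^ m) x"
proof (cases m)
  case 0
  then show ?thesis by (simp add: jprod_def)
next
  case (Suc j)
  then have "jprod (\<cdot>) star (replicate m one @ [x]) = jprod (\<cdot>) star (replicate (Suc j) one) \<bullet> x"
    using jprod_snoc[of "replicate m one" x] by simp
  also have "\<dots> = sc (2 ^ j) one \<bullet> x"
    by (simp only: jprod_replicate_one)
  also have "\<dots> = sc (2 ^ m) x"
    using Suc by (simp only: scale_power_2_one_jmult)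
  finally show ?thesis .
qed

lemma jprod_ones_prefix2: "jprod (\<cdot>) star (replicate m one @ [x, y]) = sc (2 ^ m) (x \<bullet> y)"
  using jprod_snoc[of "replicate m one @ [x]" y]
  by (simp add: jprod_ones_prefix scale_power_2_jmult)

lemma sum_jmult_left: "(\<Sum>k<(m::nat). f k) \<bullet> x = (\<Sum>k<m. f k \<bullet> x)"
  by (induction m) (simp_all add: jmult_add_left)

definition star_cone :: "'a \<Rightarrow> 'a set" where
  "star_cone w = {sc (of_nat a) w + sc (of_nat b) (star w) | a b. True}"

lemma star_cone_self: "w \<in> star_cone w"
  unfolding star_cone_def by (rule CollectI, rule exI[of _ 1], rule exI[of _ 0]) simp

lemma star_cone_add:
  assumes "u \<in> star_cone w" "v \<in> star_cone w" shows "u + v \<in> star_cone w"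
proof -
  obtain a b c d where "u = sc (of_nat a) w + sc (of_nat b) (star w)"
    and "v = sc (of_nat c) w + sc (of_nat d) (star w)"
    using assms unfolding star_cone_def by blast
  then have "u + v = sc (of_nat (a + c)) w + sc (of_nat (b + d)) (star w)"
    by (simp add: vs.scale_left_distrib algebra_simps)
  then show ?thesis unfolding star_cone_def by blast
qed

lemma star_cone_sum:
  "(\<And>k. k < m \<Longrightarrow> f k \<in> star_cone w) \<Longrightarrow> (\<Sum>k<(m::nat). f k) \<in> star_cone w"
proof (induction m)
  case 0
  have "sc (of_nat 0) w + sc (of_nat 0) (star w) = 0" by simp
  then show ?case unfolding star_cone_def by (metis (mono_tags, lifting) CollectI sum.empty lessThan_0)
next
  case (Suc m)
  then show ?case by (simp add: star_cone_add)
qed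

lemma star_cone_jmult_one: "v \<in> star_cone w \<Longrightarrow> v \<bullet> one \<in> star_cone w"
proof -
  assume "v \<in> star_cone w"
  then obtain a b where v: "v = sc (of_nat a) w + sc (of_nat b) (star w)"
    unfolding star_cone_def by blast
  have "v \<bullet> one = sc (of_nat (a + b)) w + sc (of_nat (a + b)) (star w)"
    unfolding v by (simp add: jmult_def star_add star_scale_of_nat vs.scale_left_distrib algebra_simps)
  then show ?thesis unfolding star_cone_def by blast
qed

lemma star_cone_foldl_ones: "v \<in> star_cone w \<Longrightarrow> foldl (\<bullet>) v (replicate j one) \<in> star_cone w"
  by (induction j arbitrary: v) (simp_all add: star_cone_jmult_one)

lemma jprod_update_ones_in_star_cone:
  assumes "k < m" shows "jprod (\<cdot>) star ((replicate m one)[k := w]) \<in> star_cone w"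
proof -
  have update: "(replicate m one)[k := w] = replicate k one @ w # replicate (m - Suc k) one"
    using assms by (simp add: list_eq_iff_nth_eq nth_append nth_list_update)
  show ?thesis
    unfolding update
  proof (cases k)
    case 0
    then show "jprod (\<cdot>) star (replicate k one @ w # replicate (m - Suc k) one) \<in> star_cone w"
      by (simp add: jprod_def star_cone_foldl_ones star_cone_self)
  next
    case (Suc j)
    have "foldl (\<bullet>) one (replicate j one) \<bullet> w = sc (2 ^ j) one \<bullet> w"
      using jprod_replicate_one[of j] by (simp add: jprod_def)
    also have "\<dots> = sc (of_nat (2 ^ Suc j)) w"
      by (simp add: scale_power_2_one_jmult del: power_Suc)
    finally have "foldl (\<bullet>) one (replicate j one) \<bullet> w \<in> star_cone w"
      unfolding star_cone_def by (rule_tac CollectI, rule_tac exI[of _ "2 ^ Suc j"], rule_tac exI[of _ 0]) simp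
    then show "jprod (\<cdot>) star (replicate k one @ w # replicate (m - Suc k) one) \<in> star_cone w"
      using Suc by (simp add: jprod_def replicate_append_same star_cone_foldl_ones)
  qed
qed

definition unit_terms :: "('a \<Rightarrow> 'a) \<Rightarrow> nat \<Rightarrow> 'a" where
  "unit_terms \<Phi> m = (\<Sum>k<m. jprod (\<cdot>) star ((replicate m one)[k := \<Phi> one]))"

lemma unit_terms_in_star_cone: "unit_terms \<Phi> m \<in> star_cone (\<Phi> one)"
  unfolding unit_terms_def by (rule star_cone_sum) (rule jprod_update_ones_in_star_cone)

lemma jprod_identity_scaled:
  assumes "n \<ge> 2"
    and identity: "let as = replicate (n - 2) one @ [x, y] in
      \<Phi> (jprod (\<cdot>) star as) = (\<Sum>k<n. jprod (\<cdot>) star (as[k := \<Phi> (as ! k)]))"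
  shows "\<Phi> (sc (2 ^ (n - 2)) (x \<bullet> y)) = (unit_terms \<Phi> (n - 2) \<bullet> x) \<bullet> y
    + sc (2 ^ (n - 2)) (\<Phi> x \<bullet> y) + sc (2 ^ (n - 2)) (x \<bullet> \<Phi> y)"
proof -
  define m where "m = n - 2"
  have n: "n = Suc (Suc m)" using assms(1) m_def by simp
  let ?as = "replicate m one @ [x, y]"
  let ?term = "\<lambda>k. jprod (\<cdot>) star (?as[k := \<Phi> (?as ! k)])"
  have unit_term: "?term k = (jprod (\<cdot>) star ((replicate m one)[k := \<Phi> one]) \<bullet> x) \<bullet> y"
    if k: "k < m" for k
  proof -
    let ?us = "(replicate m one)[k := \<Phi> one]"
    have "?as[k := \<Phi> (?as ! k)] = (?us @ [x]) @ [y]"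
      using k by (simp add: nth_append list_update_append1)
    moreover have "?us \<noteq> []" using k by simp
    ultimately show ?thesis
      using jprod_snoc[of "?us @ [x]" y] jprod_snoc[of ?us x] by simp
  qed
  have "?as[m := \<Phi> (?as ! m)] = replicate m one @ [\<Phi> x, y]"
    and "?as[Suc m := \<Phi> (?as ! Suc m)] = replicate m one @ [x, \<Phi> y]"
    by (simp_all add: nth_append list_update_append)
  then have split: "(\<Sum>k<n. ?term k) =
      (\<Sum>k<m. ?term k) + sc (2 ^ m) (\<Phi> x \<bullet> y) + sc (2 ^ m) (x \<bullet> \<Phi> y)"
    by (simp add: n jprod_ones_prefix2)
  have "\<Phi> (sc (2 ^ m) (x \<bullet> y)) = \<Phi> (jprod (\<cdot>) star ?as)"
    by (simp only: jprod_ones_prefix2)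
  also have "\<dots> = (\<Sum>k<n. ?term k)"
    using identity by (simp only: Let_def m_def)
  also have "\<dots> = (unit_terms \<Phi> m \<bullet> x) \<bullet> y + sc (2 ^ m) (\<Phi> x \<bullet> y) + sc (2 ^ m) (x \<bullet> \<Phi> y)"
    unfolding split by (simp add: unit_term unit_terms_def sum_jmult_left)
  finally show ?thesis unfolding m_def .
qed

end

lemma alt_star_algebra_if_unital:
  "unital_alt_star_algebra sc mult star one \<Longrightarrow> alt_star_algebra sc mult star one"
  unfolding unital_alt_star_algebra_def complex_bilinear_mult_def alternative_def
    is_unit_def involution_def alt_star_algebra_def
  by auto

theorem theorem1:
  fixes sc :: "complex \<Rightarrow> 'a::ab_group_add \<Rightarrow> 'a"
    and mult :: "'a \<Rightarrow> 'a \<Rightarrow> 'a"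
    and star :: "'a \<Rightarrow> 'a" and one :: 'a and e :: 'a
    and \<Phi> :: "'a \<Rightarrow> 'a" and n :: nat
  assumes alg: "unital_alt_star_algebra sc mult star one"
    and n2: "n \<ge> 2"
    and e_idem: "mult e e = e" and e_sym: "star e = e"
    and e_nz: "e \<noteq> 0" and e_ne1: "e \<noteq> one"
    and cond_i: "\<And>x. (\<forall>a. mult (mult x a) e = 0) \<Longrightarrow> x = 0"
    and cond_ii: "\<And>x. (\<forall>a. mult (mult x a) (one - e) = 0) \<Longrightarrow> x = 0"
    and hyp: "\<And>x y. let as = replicate (n - 2) one @ [x, y] in
               \<Phi> (jprod mult star as) = (\<Sum>k<n. jprod mult star (as[k := \<Phi> (as ! k)]))"
  shows "additive_star_derivation mult star \<Phi>"
proof -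
  interpret alt_star_algebra sc mult star one
    using alg by (rule alt_star_algebra_if_unital)
  obtain \<alpha> \<beta> where U: "unit_terms \<Phi> (n - 2) = sc (of_nat \<alpha>) (\<Phi> one) + sc (of_nat \<beta>) (star (\<Phi> one))"
    using unit_terms_in_star_cone unfolding star_cone_def by blast
  interpret scaled_jordan_identity sc mult star one e \<Phi> "2 ^ (n - 2)" "unit_terms \<Phi> (n - 2)" \<alpha> \<beta>
  proof
    show "mult e e = e" by (rule e_idem)
    show "star e = e" by (rule e_sym)
    show "\<And>x. \<forall>a. mult (mult x a) e = 0 \<Longrightarrow> x = 0" by (rule cond_i)
    show "\<And>x. \<forall>a. mult (mult x a) (one - e) = 0 \<Longrightarrow> x = 0" by (rule cond_ii)
    show "0 < (2::nat) ^ (n - 2)" by simp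
    show "unit_terms \<Phi> (n - 2) = sc (of_nat \<alpha>) (\<Phi> one) + sc (of_nat \<beta>) (star (\<Phi> one))"
      by (rule U)
    show "\<Phi> (sc (of_nat (2 ^ (n - 2))) (jstar mult star x y)) =
      jstar mult star (jstar mult star (unit_terms \<Phi> (n - 2)) x) y
      + sc (of_nat (2 ^ (n - 2))) (jstar mult star (\<Phi> x) y)
      + sc (of_nat (2 ^ (n - 2))) (jstar mult star x (\<Phi> y))" for x y
      using jprod_identity_scaled[OF n2 hyp] by simp
  qed
  show ?thesis by (rule additive_star_derivation)
qed

end
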